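(* Let $\mathbf{S}$ be a $k$-safety hyperproperty over a finite alphabet $\Sigma$, let $\mathcal{O} = (S,E,\Delta)$ be an observation table for $\mathbf{S}$ over the alphabet $\Sigma^{k'}$ for some $k' \in \mathbb{N}$, and let $k'' > k'$. Let $\mathcal{O}' = (S',E',\Delta')$ be the observation table over $\Sigma^{k''}$ with $S' = \{\epsilon\} \cup \{\mathrm{extend}(s,k'') \mid s \in S\}$, $E' = \{\epsilon\} \cup \{\mathrm{extend}(e,k'') \mid e \in E\}$, and $\Delta'$ defined on $(S' \cup S'\cdot\Sigma^{k''})\cdot E'$ by membership (i.e., $\Delta'(w) = 1$ iff $\mathrm{unzip}(w) \in \mathrm{Bad}(\mathbf{S})$). Then $|\mathrm{row}(S)| = |\mathrm{row}(S')|$.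
   Context: For a finite set $T \subseteq \Sigma^*$ and $T' \subseteq \Sigma^\omega$, write $T \le T'$ if every $t \in T$ is a prefix of some $t' \in T'$. For a hyperproperty $\mathbf{S} \subseteq \mathcal{P}(\Sigma^\omega)$, $\mathrm{Bad}(\mathbf{S}) = \{T \subseteq \Sigma^* \text{ finite} \mid \forall T' \subseteq \Sigma^\omega.\ T \le T' \Rightarrow T' \notin \mathbf{S}\}$; $\mathbf{S}$ is $k$-safety if every $T' \notin \mathbf{S}$ has some $T \in \mathrm{Bad}(\mathbf{S})$ with $|T| \le k$ and $T \le T'$. For $\sigma = v_0 \cdots v_m \in (\Sigma^{n})^*$, $\mathrm{unzip}(\sigma)$ is the set of the $n$ component words $v_0[i]\cdots v_m[i]$. An observation table for $\mathbf{S}$ over $\Sigma^n$ is a triple $(S,E,\Delta)$ where $S \subseteq (\Sigma^n)^*$ is a nonempty finite prefix-closed set, $E \subseteq (\Sigma^n)^*$ is a nonempty finite suffix-closed set, and $\Delta : (S \cup S\cdot\Sigma^n)\cdot E \to \{0,1\}$ with $\Delta(w) = 1$ iff $\mathrm{unzip}(w) \in \mathrm{Bad}(\mathbf{S})$. For $s \in S \cup S\cdot \Sigma^n$, $\mathrm{row}(s): E \to \{0,1\}$ is $\mathrm{row}(s)(e) = \Delta(s\cdot e)$, and $\mathrm{row}(S) = \{\mathrm{row}(s) \mid s \in S\}$. For a letter $(a_1,\dots,a_{k'}) \in \Sigma^{k'}$ and $k'' > k'$, $\mathrm{extend}((a_1,\dots,a_{k'}),k'') = (a_1,\dots,a_{k'},a_{k'},\dots,a_{k'})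 \in \Sigma^{k''}$ (the last component repeated), extended letterwise to words. *)

theory Defs
  imports "HOL-Library.FuncSet"
begin

(* Infinite words over 'a are functions nat => 'a; finite words are lists.
   A letter of Sigma^n is an 'a list of length n; a word over Sigma^n is a list of such letters. *)

definition is_prefix_of :: "'a list \<Rightarrow> (nat \<Rightarrow> 'a) \<Rightarrow> bool" where
  "is_prefix_of t t' \<longleftrightarrow> (\<forall>i<length t. t ! i = t' i)"

definition trace_le :: "'a list set \<Rightarrow> (nat \<Rightarrow> 'a) set \<Rightarrow> bool" where
  "trace_le T T' \<longleftrightarrow> (\<forall>t\<in>T. \<exists>t'\<in>T'. is_prefix_of t t')"

definition Bad :: "(nat \<Rightarrow> 'a) set set \<Rightarrow> 'a list set set" where
  "Bad H = {T. finite T \<and> (\<forall>T'. trace_le T T' \<longrightarrow> T' \<notin> H)}"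

definition k_safety :: "(nat \<Rightarrow> 'a) set set \<Rightarrow> nat \<Rightarrow> bool" where
  "k_safety H k \<longleftrightarrow> (\<forall>T'. T' \<notin> H \<longrightarrow> (\<exists>T\<in>Bad H. card T \<le> k \<and> trace_le T T'))"

definition unzip :: "nat \<Rightarrow> 'a list list \<Rightarrow> 'a list set" where
  "unzip n \<sigma> = {map (\<lambda>v. v ! i) \<sigma> | i. i < n}"

definition extend_letter :: "nat \<Rightarrow> 'a list \<Rightarrow> 'a list" where
  "extend_letter k'' v = v @ replicate (k'' - length v) (last v)"

definition extend :: "nat \<Rightarrow> 'a list list \<Rightarrow> 'a list list" where
  "extend k'' w = map (extend_letter k'') w"

definition obs_table ::
  "(nat \<Rightarrow> 'a) set set \<Rightarrow> nat \<Rightarrow> 'a list list set \<Rightarrow> 'a list list set \<Rightarrow> ('a list list \<Rightarrow> bool) \<Rightarrow> bool" where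
  "obs_table H n S E \<Delta> \<longleftrightarrow>
     S \<subseteq> lists {v. length v = n} \<and> finite S \<and> S \<noteq> {} \<and> (\<forall>u v. u @ v \<in> S \<longrightarrow> u \<in> S) \<and>
     E \<subseteq> lists {v. length v = n} \<and> finite E \<and> E \<noteq> {} \<and> (\<forall>u v. u @ v \<in> E \<longrightarrow> v \<in> E) \<and>
     (\<forall>s \<in> S \<union> {s @ [a] | s a. s \<in> S \<and> length a = n}. \<forall>e\<in>E.
        \<Delta> (s @ e) = (unzip n (s @ e) \<in> Bad H))"

definition row :: "('a list list \<Rightarrow> bool) \<Rightarrow> 'a list list set \<Rightarrow> 'a list list \<Rightarrow> ('a list list \<Rightarrow> bool)" where
  "row \<Delta> E s = restrict (\<lambda>e. \<Delta> (s @ e)) E"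

definition rows :: "('a list list \<Rightarrow> bool) \<Rightarrow> 'a list list set \<Rightarrow> 'a list list set \<Rightarrow> ('a list list \<Rightarrow> bool) set" where
  "rows \<Delta> E S = row \<Delta> E ` S"

end

theory Submission
  imports Defs
begin

text \<open>
  Repeating the last component of every letter only duplicates component words, so
  \<open>unzip\<close> of an extended word is \<open>unzip\<close> of the original word. Hence the membership
  table on extended words agrees entry by entry with \<open>\<Delta>\<close>, and two rows of \<open>S\<close> coincide
  iff their extensions do. The empty word, added explicitly to \<open>S'\<close> and \<open>E'\<close>, already
  lies in the prefix-closed \<open>S\<close> and the suffix-closed \<open>E\<close>. Two maps with the same kernel
  on \<open>S\<close> have images of the same cardinality.
\<close>

lemma card_image_eq_if_same_kernel:
  assumes "\<And>x y. x \<in> A \<Longrightarrow> y \<in> A \<Longrightarrow> f x = f y \<longleftrightarrow> g x = g y"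
  shows "card (f ` A) = card (g ` A)"
proof -
  define h where "h r = g (inv_into A f r)" for r
  have h_f: "h (f x) = g x" if "x \<in> A" for x
    using assms[of "inv_into A f (f x)" x] that
    by (simp add: h_def inv_into_into f_inv_into_f)
  then have "h ` f ` A = g ` A"
    by (force simp: image_iff)
  moreover have "inj_on h (f ` A)"
  proof (rule inj_onI)
    fix a b
    assume "a \<in> f ` A" "b \<in> f ` A" "h a = h b"
    then obtain x y where "x \<in> A" "y \<in> A" "a = f x" "b = f y" "g x = g y"
      using h_f by auto
    then show "a = b"
      using assms by blast
  qed
  ultimately show ?thesis
    by (metis card_image)
qed

lemma unzip_eq_image: "unzip n w = (\<lambda>i. map (\<lambda>v. v ! i) w) ` {..<n}"
  by (auto simp: unzip_def)

lemma extend_Nil [simp]: "extend n [] = []"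
  by (simp add: extend_def)

lemma extend_append [simp]: "extend n (u @ w) = extend n u @ extend n w"
  by (simp add: extend_def)

lemma insert_Nil_extend_image:
  "[] \<in> A \<Longrightarrow> insert [] (extend n ` A) = extend n ` A"
  by (metis extend_Nil image_eqI insert_absorb)

lemma nth_extend_letter:
  assumes "v \<noteq> []" "i < n"
  shows "extend_letter n v ! i = v ! min i (length v - 1)"
proof (cases "i < length v")
  case True
  then show ?thesis
    by (simp add: extend_letter_def nth_append)
next
  case False
  then have "min i (length v - 1) = length v - 1"
    by simp
  then show ?thesis
    using False assms by (simp add: extend_letter_def nth_append last_conv_nth)
qed

lemma unzip_extend:
  assumes "w \<in> lists {v. length v = m}" "0 < m" "m \<le> n"
  shows "unzip n (extend n w) = unzip m w"
proof -
  have "map (\<lambda>v. v ! i) (extend n w) = map (\<lambda>v. v ! min i (m - 1)) w" if "i < n" for i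
    using assms that by (auto simp: extend_def nth_extend_letter)
  then have "unzip n (extend n w) = (\<lambda>i. map (\<lambda>v. v ! i) w) ` (\<lambda>i. min i (m - 1)) ` {..<n}"
    by (simp add: unzip_eq_image image_image)
  also have "(\<lambda>i. min i (m - 1)) ` {..<n} = {..<m}"
    using assms(2,3) by (force simp: image_iff min_def)
  finally show ?thesis
    by (simp add: unzip_eq_image)
qed

lemma row_eq_iff: "row \<Delta> E s = row \<Delta> E t \<longleftrightarrow> (\<forall>e\<in>E. \<Delta> (s @ e) = \<Delta> (t @ e))"
  unfolding row_def
proof
  assume rows_eq: "(\<lambda>e\<in>E. \<Delta> (s @ e)) = (\<lambda>e\<in>E. \<Delta> (t @ e))"
  show "\<forall>e\<in>E. \<Delta> (s @ e) = \<Delta> (t @ e)"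
  proof
    fix e
    assume "e \<in> E"
    then show "\<Delta> (s @ e) = \<Delta> (t @ e)"
      using fun_cong[OF rows_eq, of e] by simp
  qed
qed (auto intro: restrict_ext)

lemma obs_table_Nil_in_S: "obs_table H n S E \<Delta> \<Longrightarrow> [] \<in> S"
  unfolding obs_table_def by (metis all_not_in_conv append_Nil)

lemma obs_table_Nil_in_E: "obs_table H n S E \<Delta> \<Longrightarrow> [] \<in> E"
  unfolding obs_table_def by (metis all_not_in_conv append_Nil2)

lemma obs_table_words:
  assumes "obs_table H n S E \<Delta>"
  shows "S \<subseteq> lists {v. length v = n}" "E \<subseteq> lists {v. length v = n}"
  using assms unfolding obs_table_def by blast+

lemma obs_table_entry:
  "obs_table H n S E \<Delta> \<Longrightarrow> s \<in> S \<Longrightarrow> e \<in> E \<Longrightarrow> \<Delta> (s @ e) = (unzip n (s @ e) \<in> Bad H)"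
  unfolding obs_table_def by blast

lemma obs_table_entry_extend:
  assumes "obs_table H m S E \<Delta>" "0 < m" "m \<le> n" "s \<in> S" "e \<in> E"
  shows "(unzip n (extend n s @ extend n e) \<in> Bad H) = \<Delta> (s @ e)"
proof -
  have "unzip n (extend n (s @ e)) = unzip m (s @ e)"
    by (rule unzip_extend[OF _ assms(2,3)]) (use obs_table_words[OF assms(1)] assms(4,5) in auto)
  then show ?thesis
    using obs_table_entry[OF assms(1,4,5)] by simp
qed

lemma row_extend_eq_iff:
  assumes "obs_table H m S E \<Delta>" "0 < m" "m \<le> n" "s \<in> S" "t \<in> S"
  shows "row (\<lambda>w. unzip n w \<in> Bad H) (extend n ` E) (extend n s)
      = row (\<lambda>w. unzip n w \<in> Bad H) (extend n ` E) (extend n t)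
    \<longleftrightarrow> row \<Delta> E s = row \<Delta> E t"
  using assms obs_table_entry_extend[OF assms(1-3)]
  by (simp add: row_eq_iff)

theorem lemma6:
  fixes H :: "(nat \<Rightarrow> 'a::finite) set set"
    and k k' k'' :: nat
    and S E :: "'a list list set"
    and \<Delta> :: "'a list list \<Rightarrow> bool"
  assumes "k_safety H k"
    and "obs_table H k' S E \<Delta>"
    and "0 < k'"
    and "k' < k''"
  shows "card (rows \<Delta> E S) =
         card (rows (\<lambda>w. unzip k'' w \<in> Bad H)
                    (insert [] (extend k'' ` E)) (insert [] (extend k'' ` S)))"
proof -
  let ?P = "\<lambda>w. unzip k'' w \<in> Bad H" and ?E' = "extend k'' ` E"
  have "card (rows \<Delta> E S) = card ((\<lambda>s. row ?P ?E' (extend k'' s)) ` S)"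
    unfolding rows_def
    by (rule card_image_eq_if_same_kernel)
      (use row_extend_eq_iff[OF assms(2,3)] assms(4) in simp)
  also have "\<dots> = card (rows ?P ?E' (extend k'' ` S))"
    by (simp add: rows_def image_image)
  finally show ?thesis
    using assms(2) by (simp add: insert_Nil_extend_image obs_table_Nil_in_S obs_table_Nil_in_E)
qed

end
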